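(* Let $0\le\alpha\le1$ and define $\delta(X,Y)=\alpha\, m(X,Y)+(1-\alpha)M(X,Y)$ for finite sets $X,Y$. Then $\delta$ satisfies the triangle inequality $\delta(X,Y)\le\delta(X,Z)+\delta(Z,Y)$ for all finite subsets $X,Y,Z$ of $\mathbb N$ if and only if $\alpha\le\tfrac12$.
   Context: For finite sets $X,Y$ let $m(X,Y)=\min\{|X\setminus Y|,|Y\setminus X|\}$ and $M(X,Y)=\max\{|X\setminus Y|,|Y\setminus X|\}$. *)

theory Defs
  imports Main "HOL.Real"
begin

definition m_dist :: "'a set \<Rightarrow> 'a set \<Rightarrow> nat" where
  "m_dist X Y = min (card (X - Y)) (card (Y - X))"

definition M_dist :: "'a set \<Rightarrow> 'a set \<Rightarrow> nat" where
  "M_dist X Y = max (card (X - Y)) (card (Y - X))"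

definition delta :: "real \<Rightarrow> 'a set \<Rightarrow> 'a set \<Rightarrow> real" where
  "delta \<alpha> X Y = \<alpha> * real (m_dist X Y) + (1 - \<alpha>) * real (M_dist X Y)"

end

theory Submission
  imports Defs
begin

text \<open>Since \<open>m + M\<close> is the size of the symmetric difference,
  \<open>\<delta> = \<alpha> |X \<triangle> Y| + (1 - 2\<alpha>) M(X,Y)\<close>. Both \<open>|X \<triangle> Y|\<close> and \<open>M\<close> satisfy the triangle
  inequality, so \<open>\<delta>\<close> does whenever \<open>1 - 2\<alpha> \<ge> 0\<close>. Conversely, for \<open>X = {0}\<close>,
  \<open>Y = {2}\<close>, \<open>Z = {0,2}\<close> the triangle inequality reads \<open>1 \<le> 2(1 - \<alpha>)\<close>.\<close>

lemma card_Diff_le_card_Diff_add: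
  assumes "finite X" "finite Z"
  shows "card (X - Y) \<le> card (X - Z) + card (Z - Y)"
proof -
  have "card (X - Y) \<le> card ((X - Z) \<union> (Z - Y))"
    by (rule card_mono) (use assms in auto)
  also have "\<dots> \<le> card (X - Z) + card (Z - Y)" by (rule card_Un_le)
  finally show ?thesis .
qed

lemma M_dist_triangle:
  assumes "finite X" "finite Y" "finite Z"
  shows "M_dist X Y \<le> M_dist X Z + M_dist Z Y"
  using card_Diff_le_card_Diff_add[of X Z Y] card_Diff_le_card_Diff_add[of Y Z X] assms
  unfolding M_dist_def by auto

lemma delta_eq_card_Diffs_M_dist:
  "delta \<alpha> X Y = \<alpha> * (real (card (X - Y)) + real (card (Y - X))) + (1 - 2 * \<alpha>) * real (M_dist X Y)"
  unfolding delta_def m_dist_def M_dist_def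
  by (cases "card (X - Y) \<le> card (Y - X)") (simp_all add: algebra_simps)

lemma delta_triangle:
  assumes "0 \<le> \<alpha>" "\<alpha> \<le> 1/2" and "finite X" "finite Y" "finite Z"
  shows "delta \<alpha> X Y \<le> delta \<alpha> X Z + delta \<alpha> Z Y"
proof -
  have "real (card (X - Y)) + real (card (Y - X)) \<le>
      (real (card (X - Z)) + real (card (Z - X))) + (real (card (Z - Y)) + real (card (Y - Z)))"
    using card_Diff_le_card_Diff_add[of X Z Y] card_Diff_le_card_Diff_add[of Y Z X] assms
    by linarith
  then have sym_diff: "\<alpha> * (real (card (X - Y)) + real (card (Y - X))) \<le>
      \<alpha> * ((real (card (X - Z)) + real (card (Z - X))) + (real (card (Z - Y)) + real (card (Y - Z))))"
    using assms(1) by (rule mult_left_mono)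
  have "(1 - 2 * \<alpha>) * real (M_dist X Y) \<le> (1 - 2 * \<alpha>) * (real (M_dist X Z) + real (M_dist Z Y))"
    using M_dist_triangle[OF assms(3-5)] assms(2) by (intro mult_left_mono) auto
  with sym_diff show ?thesis
    unfolding delta_eq_card_Diffs_M_dist by (simp add: algebra_simps)
qed

lemma delta_singletons:
  assumes "a \<noteq> b"
  shows "delta \<alpha> {a} {b} = 1" and "delta \<alpha> {a} {a, b} = 1 - \<alpha>" and "delta \<alpha> {a, b} {b} = 1 - \<alpha>"
  using assms by (auto simp: delta_def m_dist_def M_dist_def insert_Diff_if)

theorem mainTheorem7:
  fixes \<alpha> :: real
  assumes "0 \<le> \<alpha>" and "\<alpha> \<le> 1"
  shows "(\<forall>X Y Z :: nat set. finite X \<longrightarrow> finite Y \<longrightarrow> finite Z \<longrightarrow>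
            delta \<alpha> X Y \<le> delta \<alpha> X Z + delta \<alpha> Z Y) \<longleftrightarrow> \<alpha> \<le> 1/2"
proof
  assume "\<forall>X Y Z :: nat set. finite X \<longrightarrow> finite Y \<longrightarrow> finite Z \<longrightarrow>
            delta \<alpha> X Y \<le> delta \<alpha> X Z + delta \<alpha> Z Y"
  then have "delta \<alpha> {0::nat} {2} \<le> delta \<alpha> {0::nat} {0, 2} + delta \<alpha> {0::nat, 2} {2}"
    by simp
  then show "\<alpha> \<le> 1/2"
    by (simp add: delta_singletons)
next
  assume "\<alpha> \<le> 1/2"
  then show "\<forall>X Y Z :: nat set. finite X \<longrightarrow> finite Y \<longrightarrow> finite Z \<longrightarrow>
            delta \<alpha> X Y \<le> delta \<alpha> X Z + delta \<alpha> Z Y"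
    using assms(1) delta_triangle by blast
qed

end
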